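(* Let $N\ge1$, $\lambda>1$, $p\in(0,1)$. Let $\{\eta_t\}$ be the bias voter model on $\mathbb{T}^N$ with parameters $\lambda$ and $\theta=1$, and let $\{\zeta_t\}$ be the contact process on $\mathbb{T}^N$ with parameter $\lambda$, both started from initial distribution $\mu_p$. Then for every $A\subseteq\mathbb{T}^N$ and every $t\ge0$, \[ P(\eta_t(x)=0\ \forall x\in A)\le P(\zeta_t(x)=0\ \forall x\in A). \]
   Context: $\mathbb{T}^N$ denotes the infinite regular tree in which every vertex has degree $N+1$. The bias voter model on $\mathbb{T}^N$ with parameters $\lambda>\theta>0$ is the spin system on $\{0,1\}^{\mathbb{T}^N}$ with flip rate at $x$ in configuration $\eta$ equal to $\frac{\lambda}{N+1}\sum_{y\sim x}\eta(y)$ if $\eta(x)=0$ and $\frac{\theta}{N+1}\sum_{y\sim x}(1-\eta(y))$ if $\eta(x)=1$. The contact process on $\mathbb{T}^N$ with parameter $\lambda$ is the spin system on $\{0,1\}^{\mathbb{T}^N}$ with flip rate at $x$ in configuration $\zeta$ equal to $1$ if $\zeta(x)=1$ and $\frac{\lambda}{N+1}\sum_{y\sim x}\zeta(y)$ if $\zeta(x)=0$. $\mu_p$ denotes the product Bernoulli measure with density $p$. *)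

theory Defs
  imports "HOL-Probability.Probability"
begin

text \<open>The regular tree T^N (every vertex of degree N+1), realised as the Cayley graph of the
free product of N+1 copies of Z/2: vertices are words over {0..N} with no two equal
consecutive letters; x ~ y iff one word extends the other by exactly one letter.\<close>

definition tree_V :: "nat \<Rightarrow> nat list set" where
  "tree_V N = {w. (\<forall>i\<in>set w. i \<le> N) \<and> (\<forall>k. Suc k < length w \<longrightarrow> w ! k \<noteq> w ! Suc k)}"

definition tree_adj :: "nat list \<Rightarrow> nat list \<Rightarrow> bool" where
  "tree_adj x y \<longleftrightarrow> (\<exists>i. y = x @ [i]) \<or> (\<exists>i. x = y @ [i])"

definition nbrs :: "nat \<Rightarrow> nat list \<Rightarrow> nat list set" where
  "nbrs N x = {y \<in> tree_V N. tree_adj x y}"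

text \<open>Configurations: eta x = True means eta(x) = 1.\<close>
type_synonym config = "nat list \<Rightarrow> bool"

definition config_space :: "nat \<Rightarrow> config measure" where
  "config_space N = PiM (tree_V N) (\<lambda>_. count_space (UNIV :: bool set))"

definition bern_product :: "nat \<Rightarrow> real \<Rightarrow> config measure" where
  "bern_product N p = PiM (tree_V N) (\<lambda>_. measure_pmf (bernoulli_pmf p))"

definition flip :: "config \<Rightarrow> nat list \<Rightarrow> config" where
  "flip \<eta> x = \<eta>(x := \<not> \<eta> x)"

definition bv_rate :: "nat \<Rightarrow> real \<Rightarrow> real \<Rightarrow> config \<Rightarrow> nat list \<Rightarrow> real" where
  "bv_rate N lam th \<eta> x =
     (if \<eta> x then th / real (N + 1) * real (card {y \<in> nbrs N x. \<not> \<eta> y})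
      else lam / real (N + 1) * real (card {y \<in> nbrs N x. \<eta> y}))"

definition cp_rate :: "nat \<Rightarrow> real \<Rightarrow> config \<Rightarrow> nat list \<Rightarrow> real" where
  "cp_rate N lam \<eta> x =
     (if \<eta> x then 1 else lam / real (N + 1) * real (card {y \<in> nbrs N x. \<eta> y}))"

definition cylinder_on :: "nat \<Rightarrow> nat list set \<Rightarrow> (config \<Rightarrow> real) \<Rightarrow> bool" where
  "cylinder_on N F f \<longleftrightarrow> finite F \<and> F \<subseteq> tree_V N \<and>
     (\<forall>\<eta> \<eta>'. (\<forall>x\<in>F. \<eta> x = \<eta>' x) \<longrightarrow> f \<eta> = f \<eta>')"

definition gen :: "(config \<Rightarrow> nat list \<Rightarrow> real) \<Rightarrow> nat list set \<Rightarrow> (config \<Rightarrow> real) \<Rightarrow> config \<Rightarrow> real" where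
  "gen c F f \<eta> = (\<Sum>x\<in>F. c \<eta> x * (f (flip \<eta> x) - f \<eta>))"

text \<open>mu t is the law at time t of the spin system with rates c started from mu0:
the family of time marginals solves the Kolmogorov forward equation
d/dt E_{mu t}[f] = E_{mu t}[Omega f] for all cylinder functions f (which characterises the
law of the spin system uniquely for bounded, finite-range rates).\<close>
definition spin_system_law ::
  "nat \<Rightarrow> (config \<Rightarrow> nat list \<Rightarrow> real) \<Rightarrow> config measure \<Rightarrow> (real \<Rightarrow> config measure) \<Rightarrow> bool" where
  "spin_system_law N c \<mu>0 \<mu> \<longleftrightarrow>
     (\<forall>t\<ge>0. prob_space (\<mu> t) \<and> sets (\<mu> t) = sets (config_space N)) \<and>
     \<mu> 0 = \<mu>0 \<and>
     (\<forall>F f t. cylinder_on N F f \<and> t \<ge> 0 \<longrightarrow>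
        ((\<lambda>s. \<integral>\<eta>. f \<eta> \<partial>\<mu> s) has_real_derivative (\<integral>\<eta>. gen c F f \<eta> \<partial>\<mu> t)) (at t within {0..}))"

end

theory Submission
  imports Defs
begin

text \<open>Write u(t, A) for the probability that the configuration at time t vanishes on the finite
set A. Applied to the indicator of that event, the generator of the contact process equals the
generator of its dual process (each site of A disappears at rate 1 and each site of A adds each of
its neighbours at rate \<lambda>/(N+1)) applied to A \<mapsto> u(t, A). For the bias voter model with
\<theta> = 1 the same computation only gives an inequality, because an occupied site of A whose
other sites in A are vacant flips at rate at most 1 instead of exactly 1. Hence the difference
w = u_BV - u_CP is a subsolution of the dual backward equation with w(0, \<cdot>) = 0 and w \<le> 1.
Since a dual jump changes the size of A by one, iterating the differential inequality on a time
interval of length 1/(4(1 + \<lambda>)) bounds w by 2^|A| / 2^n for every n, so w \<le> 0 step by step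
in time. Infinite A follow by continuity of measure from above.\<close>

lemma nbrs_subset_tree_V: "nbrs N x \<subseteq> tree_V N"
  unfolding nbrs_def by auto

lemma finite_nbrs: "finite (nbrs N x)"
proof (rule finite_subset)
  show "nbrs N x \<subseteq> insert (butlast x) ((\<lambda>i. x @ [i]) ` {..N})"
    unfolding nbrs_def tree_adj_def tree_V_def by auto
qed simp

lemma snoc_last_notin_tree_V: "x \<noteq> [] \<Longrightarrow> x @ [last x] \<notin> tree_V N"
proof
  assume x: "x \<noteq> []" and "x @ [last x] \<in> tree_V N"
  then have "(x @ [last x]) ! (length x - 1) \<noteq> (x @ [last x]) ! Suc (length x - 1)"
    unfolding tree_V_def by (cases x) auto
  then show False using x by (simp add: nth_append last_conv_nth)
qed

lemma card_nbrs_le: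
  assumes "x \<in> tree_V N"
  shows "card (nbrs N x) \<le> N + 1"
proof (cases "x = []")
  case True
  then have "nbrs N x \<subseteq> (\<lambda>i. [i]) ` {..N}"
    unfolding nbrs_def tree_adj_def tree_V_def by auto
  then have "card (nbrs N x) \<le> card ((\<lambda>i. [i]) ` {..N})"
    by (intro card_mono) simp_all
  also have "\<dots> \<le> N + 1"
    using card_image_le[of "{..N}" "\<lambda>i. [i]"] by simp
  finally show ?thesis .
next
  case False
  have "last x \<le> N"
    using assms False unfolding tree_V_def by auto
  have "nbrs N x \<subseteq> insert (butlast x) ((\<lambda>i. x @ [i]) ` ({..N} - {last x}))"
    using snoc_last_notin_tree_V[OF False, of N]
    unfolding nbrs_def tree_adj_def tree_V_def by auto
  then have "card (nbrs N x) \<le> card (insert (butlast x) ((\<lambda>i. x @ [i]) ` ({..N} - {last x})))"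
    by (intro card_mono) simp_all
  also have "\<dots> \<le> Suc (card ((\<lambda>i. x @ [i]) ` ({..N} - {last x})))"
    by (simp add: card_insert_if)
  also have "\<dots> \<le> Suc (card ({..N} - {last x}))"
    by (simp add: card_image_le)
  also have "\<dots> = N + 1"
    using \<open>last x \<le> N\<close> by simp
  finally show ?thesis .
qed

lemma sets_config_space_Collect_finite:
  assumes "finite F" "F \<subseteq> tree_V N"
  shows "{\<eta> \<in> space (config_space N). \<forall>x\<in>F. P x (\<eta> x)} \<in> sets (config_space N)"
  using assms unfolding config_space_def
  by (intro sets.sets_Collect_finite_All) (auto intro!: measurable_sets[OF measurable_component_singleton])

lemma cylinder_on_measurable:
  assumes "cylinder_on N F f"
  shows "f \<in> borel_measurable (config_space N)"
proof -
  have F: "finite F" "F \<subseteq> tree_V N"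
    and f: "\<And>\<eta> \<eta>'. \<forall>x\<in>F. \<eta> x = \<eta>' x \<Longrightarrow> f \<eta> = f \<eta>'"
    using assms unfolding cylinder_on_def by blast+
  define k where "k \<eta> = {x \<in> F. \<eta> x}" for \<eta> :: config
  have "k \<in> measurable (config_space N) (count_space (Pow F))"
  proof (subst measurable_count_space_eq_countable, safe)
    show "countable (Pow F)"
      using F by (simp add: countable_finite)
    fix S assume "S \<subseteq> F"
    then have "k -` {S} \<inter> space (config_space N) =
        {\<eta> \<in> space (config_space N). \<forall>x\<in>F. \<eta> x = (x \<in> S)}"
      unfolding k_def by auto
    also have "\<dots> \<in> sets (config_space N)"
      using F by (rule sets_config_space_Collect_finite)
    finally show "k -` {S} \<inter> space (config_space N) \<in> sets (config_space N)" .
  qed (auto simp: k_def)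
  then have "(\<lambda>\<eta>. f (\<lambda>x. x \<in> k \<eta>)) \<in> borel_measurable (config_space N)"
    by (rule measurable_compose) simp
  moreover have "f (\<lambda>x. x \<in> k \<eta>) = f \<eta>" for \<eta>
    by (rule f) (simp add: k_def)
  ultimately show ?thesis by simp
qed

lemma cylinder_on_integrable:
  fixes f :: "config \<Rightarrow> real"
  assumes "cylinder_on N F f" and "prob_space M" and "sets M = sets (config_space N)"
  shows "integrable M f"
proof -
  interpret prob_space M by fact
  have F: "finite F"
    and f: "\<And>\<eta>. f \<eta> = f (\<lambda>x. x \<in> {x \<in> F. \<eta> x})"
    using assms(1) unfolding cylinder_on_def by auto
  define B where "B = Max ((\<lambda>S. norm (f (\<lambda>x. x \<in> S))) ` Pow F)"
  have "norm (f \<eta>) \<le> B" for \<eta>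
  proof -
    have "norm (f \<eta>) = norm (f (\<lambda>x. x \<in> {x \<in> F. \<eta> x}))"
      by (subst f) (rule refl)
    also have "\<dots> \<le> B"
      unfolding B_def using F by (intro Max_ge imageI) auto
    finally show ?thesis .
  qed
  moreover have "f \<in> borel_measurable M"
    using cylinder_on_measurable[OF assms(1)] measurable_cong_sets[OF assms(3) refl] by blast
  ultimately show ?thesis
    by (intro integrable_const_bound[where B = B]) auto
qed

lemma cylinder_on_gen:
  fixes c :: "config \<Rightarrow> nat list \<Rightarrow> real" and f :: "config \<Rightarrow> real"
  assumes f: "cylinder_on N F f"
    and c: "\<And>x \<eta> \<eta>'. x \<in> F \<Longrightarrow> \<forall>y\<in>insert x (nbrs N x). \<eta> y = \<eta>' y \<Longrightarrow> c \<eta> x = c \<eta>' x"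
  shows "cylinder_on N (F \<union> (\<Union>x\<in>F. nbrs N x)) (gen c F f)"
  unfolding cylinder_on_def
proof (intro conjI allI impI)
  show "finite (F \<union> (\<Union>x\<in>F. nbrs N x))" "F \<union> (\<Union>x\<in>F. nbrs N x) \<subseteq> tree_V N"
    using f nbrs_subset_tree_V finite_nbrs unfolding cylinder_on_def by auto
  fix \<eta> \<eta>' :: config assume eq: "\<forall>x\<in>F \<union> (\<Union>x\<in>F. nbrs N x). \<eta> x = \<eta>' x"
  have "f (flip \<eta> x) = f (flip \<eta>' x)" "f \<eta> = f \<eta>'" "c \<eta> x = c \<eta>' x" if "x \<in> F" for x
    using f c[OF that] eq that unfolding cylinder_on_def flip_def by auto
  then show "gen c F f \<eta> = gen c F f \<eta>'"
    unfolding gen_def by (intro sum.cong) auto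
qed

lemma bv_rate_local:
  assumes "\<forall>y\<in>insert x (nbrs N x). \<eta> y = \<eta>' y"
  shows "bv_rate N lam th \<eta> x = bv_rate N lam th \<eta>' x"
proof -
  have "{y \<in> nbrs N x. \<eta> y} = {y \<in> nbrs N x. \<eta>' y}"
    "{y \<in> nbrs N x. \<not> \<eta> y} = {y \<in> nbrs N x. \<not> \<eta>' y}"
    using assms by auto
  then show ?thesis
    using assms by (simp add: bv_rate_def)
qed

definition dual_gen :: "nat \<Rightarrow> real \<Rightarrow> nat list set \<Rightarrow> (nat list set \<Rightarrow> real) \<Rightarrow> real" where
  "dual_gen N c A u = (\<Sum>x\<in>A. u (A - {x}) - u A)
     + c * (\<Sum>x\<in>A. \<Sum>y\<in>nbrs N x - A. u (insert y A) - u A)"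

definition dual_rate :: "nat \<Rightarrow> real \<Rightarrow> nat list set \<Rightarrow> real" where
  "dual_rate N c A = real (card A) + c * (\<Sum>x\<in>A. real (card (nbrs N x - A)))"

lemma dual_gen_diff: "dual_gen N c A u - dual_gen N c A v = dual_gen N c A (\<lambda>B. u B - v B)"
proof -
  have "(\<Sum>x\<in>A. (u (A - {x}) - v (A - {x})) - (u A - v A)) =
      (\<Sum>x\<in>A. u (A - {x}) - u A) - (\<Sum>x\<in>A. v (A - {x}) - v A)"
    "(\<Sum>x\<in>A. \<Sum>y\<in>nbrs N x - A. (u (insert y A) - v (insert y A)) - (u A - v A)) =
      (\<Sum>x\<in>A. \<Sum>y\<in>nbrs N x - A. u (insert y A) - u A)
      - (\<Sum>x\<in>A. \<Sum>y\<in>nbrs N x - A. v (insert y A) - v A)"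
    by (simp_all only: sum_subtractf[symmetric]) (auto intro!: sum.cong)
  then show ?thesis
    unfolding dual_gen_def by (simp add: right_diff_distrib)
qed

lemma dual_gen_le_dual_rate:
  assumes "c \<ge> 0"
    and "\<And>x. x \<in> A \<Longrightarrow> u (A - {x}) \<le> b"
    and "\<And>x y. x \<in> A \<Longrightarrow> y \<in> nbrs N x - A \<Longrightarrow> u (insert y A) \<le> b"
  shows "dual_gen N c A u \<le> dual_rate N c A * (b - u A)"
proof -
  have "dual_gen N c A u \<le> (\<Sum>x\<in>A. b - u A) + c * (\<Sum>x\<in>A. \<Sum>y\<in>nbrs N x - A. b - u A)"
    unfolding dual_gen_def using assms
    by (intro add_mono sum_mono mult_left_mono) auto
  also have "(\<Sum>x\<in>A. \<Sum>y\<in>nbrs N x - A. b - u A) = (\<Sum>x\<in>A. real (card (nbrs N x - A))) * (b - u A)"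
    by (simp add: sum_distrib_right)
  also have "(\<Sum>x\<in>A. b - u A) = real (card A) * (b - u A)"
    by simp
  also have "real (card A) * (b - u A) + c * ((\<Sum>x\<in>A. real (card (nbrs N x - A))) * (b - u A))
      = dual_rate N c A * (b - u A)"
    unfolding dual_rate_def by (simp only: distrib_right mult.assoc)
  finally show ?thesis .
qed

lemma dual_rate_nonneg: "c \<ge> 0 \<Longrightarrow> dual_rate N c A \<ge> 0"
  unfolding dual_rate_def by (simp add: sum_nonneg)

lemma dual_rate_le:
  assumes "c \<ge> 0" and "A \<subseteq> tree_V N"
  shows "dual_rate N c A \<le> (1 + c * real (N + 1)) * real (card A)"
proof -
  have "card (nbrs N x - A) \<le> N + 1" if "x \<in> A" for x
    using card_mono[OF finite_nbrs[of N x], of "nbrs N x - A"] card_nbrs_le[of x N] that assms(2)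
    by auto
  then have "real (card (nbrs N x - A)) \<le> real (N + 1)" if "x \<in> A" for x
    using that of_nat_le_iff by blast
  then have "c * (\<Sum>x\<in>A. real (card (nbrs N x - A))) \<le> c * (\<Sum>x\<in>A. real (N + 1))"
    by (intro mult_left_mono sum_mono assms(1))
  then show ?thesis
    unfolding dual_rate_def by (simp add: algebra_simps)
qed

lemma Suc_times_add_choose_Suc: "Suc n * ((m + n) choose Suc n) = m * ((m + n) choose n)"
proof -
  have "Suc n * ((m + n) choose Suc n) = (m + n) * ((m + n - 1) choose n)"
    by (rule binomial_absorption)
  also have "\<dots> = (m + n - n) * ((m + n) choose n)"
    by (rule binomial_absorb_comp[symmetric])
  finally show ?thesis by simp
qed

lemma power_mult_choose_le:
  fixes x :: real
  assumes "0 \<le> x" "x \<le> 1/4"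
  shows "x ^ n * real ((m + n - 1) choose n) \<le> 2 ^ m * (1/2) ^ n"
proof -
  have "(m + n - 1) choose n \<le> 2 ^ (m + n - 1)"
    by (rule binomial_le_pow2)
  then have "real ((m + n - 1) choose n) \<le> 2 ^ (m + n - 1)"
    by (metis of_nat_le_iff of_nat_numeral of_nat_power)
  also have "(2::real) ^ (m + n - 1) \<le> 2 ^ (m + n)"
    by (rule power_increasing) auto
  finally have "x ^ n * real ((m + n - 1) choose n) \<le> (1/4) ^ n * 2 ^ (m + n)"
    by (intro mult_mono power_mono) (use assms in auto)
  also have "\<dots> = 2 ^ m * (1/2) ^ n"
    by (simp add: power_add power_mult_distrib[symmetric])
  finally show ?thesis .
qed

lemma exp_weighted_comparison:
  fixes w v w' v' :: "real \<Rightarrow> real"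
  assumes "T \<le> s"
    and w: "\<And>r. r \<in> {T..s} \<Longrightarrow> (w has_real_derivative w' r) (at r within {T..s})"
    and v: "\<And>r. r \<in> {T..s} \<Longrightarrow> (v has_real_derivative v' r) (at r within {T..s})"
    and deriv_le: "\<And>r. r \<in> {T<..<s} \<Longrightarrow> w' r + Q * w r \<le> v' r + Q * v r"
    and "w T \<le> v T"
  shows "w s \<le> v s"
proof -
  define h where "h r = exp (Q * r) * (w r - v r)" for r
  define h' where "h' r = exp (Q * r) * ((w' r + Q * w r) - (v' r + Q * v r))" for r
  have h: "(h has_real_derivative h' r) (at r within {T..s})" if "r \<in> {T..s}" for r
  proof -
    have "(h has_real_derivative exp (Q * r) * Q * (w r - v r) + exp (Q * r) * (w' r - v' r))
        (at r within {T..s})"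
      unfolding h_def by (rule derivative_eq_intros w[OF that] v[OF that] refl | simp)+
    then show ?thesis
      by (simp add: h'_def algebra_simps)
  qed
  have "h s \<le> h T"
  proof (rule DERIV_nonpos_imp_decreasing_open[OF \<open>T \<le> s\<close>])
    fix r assume r: "T < r" "r < s"
    then have "(h has_real_derivative h' r) (at r)"
      using h[of r] at_within_Icc_at[of T r s] by simp
    moreover have "h' r \<le> 0"
      unfolding h'_def using deriv_le[of r] r by (simp add: mult_nonneg_nonpos)
    ultimately show "\<exists>y. (h has_real_derivative y) (at r) \<and> y \<le> 0" by blast
  next
    show "continuous_on {T..s} h"
      using DERIV_continuous[OF h] continuous_on_eq_continuous_within by blast
  qed
  also have "h T \<le> 0"
    unfolding h_def using \<open>w T \<le> v T\<close> by (simp add: mult_nonneg_nonpos)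
  finally have "exp (Q * s) * (w s - v s) \<le> 0"
    unfolding h_def .
  then show ?thesis
    by (simp add: mult_le_0_iff)
qed

lemma has_real_derivative_power_mult_choose:
  "((\<lambda>r. (a * (r - T)) ^ Suc n * real ((m + n) choose Suc n)) has_real_derivative
    a * real m * ((a * (r - T)) ^ n * real ((m + n) choose n))) (at r within X)"
proof -
  have deriv: "((\<lambda>r. (a * (r - T)) ^ Suc n * real ((m + n) choose Suc n)) has_real_derivative
      real (Suc n) * (a * (r - T)) ^ n * a * real ((m + n) choose Suc n)) (at r within X)"
    by (rule derivative_eq_intros refl | simp)+
  have "real (Suc n) * (a * (r - T)) ^ n * a * real ((m + n) choose Suc n)
      = a * (a * (r - T)) ^ n * (real (Suc n) * real ((m + n) choose Suc n))"
    by (simp only: ac_simps)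
  also have "real (Suc n) * real ((m + n) choose Suc n) = real m * real ((m + n) choose n)"
    by (metis Suc_times_add_choose_Suc of_nat_mult)
  also have "a * (a * (r - T)) ^ n * (real m * real ((m + n) choose n))
      = a * real m * ((a * (r - T)) ^ n * real ((m + n) choose n))"
    by (simp only: ac_simps)
  finally have "real (Suc n) * (a * (r - T)) ^ n * a * real ((m + n) choose Suc n)
      = a * real m * ((a * (r - T)) ^ n * real ((m + n) choose n))" .
  with deriv show ?thesis
    by (simp only:)
qed

locale dual_subsolution =
  fixes N :: nat and c :: real and w w' :: "real \<Rightarrow> nat list set \<Rightarrow> real"
  assumes c_nonneg: "c \<ge> 0"
    and le_one: "\<And>s A. s \<ge> 0 \<Longrightarrow> finite A \<Longrightarrow> A \<subseteq> tree_V N \<Longrightarrow> w s A \<le> 1"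
    and has_derivative: "\<And>s A. s \<ge> 0 \<Longrightarrow> finite A \<Longrightarrow> A \<subseteq> tree_V N \<Longrightarrow>
      ((\<lambda>s. w s A) has_real_derivative w' s A) (at s within {0..})"
    and derivative_le: "\<And>s A. s \<ge> 0 \<Longrightarrow> finite A \<Longrightarrow> A \<subseteq> tree_V N \<Longrightarrow>
      w' s A \<le> dual_gen N c A (w s)"
begin

lemma derivative_plus_rate_le:
  assumes "T \<ge> 0" "T < r" and A: "finite A" "A \<subseteq> tree_V N"
    and bound: "\<And>B. finite B \<Longrightarrow> B \<subseteq> tree_V N \<Longrightarrow>
      w r B \<le> ((1 + c * real (N + 1)) * (r - T)) ^ n * real ((card B + n - 1) choose n)"
  shows "w' r A + dual_rate N c A * w r A \<le> (1 + c * real (N + 1)) * real (card A)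
    * (((1 + c * real (N + 1)) * (r - T)) ^ n * real ((card A + n) choose n))"
proof -
  define a where "a = 1 + c * real (N + 1)"
  define b where "b = (a * (r - T)) ^ n * real ((card A + n) choose n)"
  have "b \<ge> 0"
    using c_nonneg \<open>T < r\<close> by (simp add: a_def b_def)
  have del: "w r (A - {x}) \<le> b" if "x \<in> A" for x
  proof -
    have "w r (A - {x}) \<le> (a * (r - T)) ^ n * real ((card (A - {x}) + n - 1) choose n)"
      using bound[of "A - {x}"] A by (auto simp: a_def)
    also have "\<dots> \<le> b"
      unfolding b_def a_def using c_nonneg \<open>T < r\<close> card_Diff1_le[of A x]
      by (intro mult_left_mono of_nat_mono binomial_right_mono) auto
    finally show ?thesis .
  qed
  have ins: "w r (insert y A) \<le> b" if "y \<in> nbrs N x - A" for x y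
    using bound[of "insert y A"] A that nbrs_subset_tree_V by (auto simp: a_def b_def)
  have "w' r A \<le> dual_gen N c A (w r)"
    using derivative_le[of r A] A \<open>T \<ge> 0\<close> \<open>T < r\<close> by simp
  also have "\<dots> \<le> dual_rate N c A * (b - w r A)"
    using del ins by (intro dual_gen_le_dual_rate[OF c_nonneg])
  finally have "w' r A + dual_rate N c A * w r A \<le> dual_rate N c A * b"
    by (simp add: right_diff_distrib)
  also have "\<dots> \<le> a * real (card A) * b"
    unfolding a_def using dual_rate_le[OF c_nonneg A(2)] \<open>b \<ge> 0\<close> by (rule mult_right_mono)
  finally show ?thesis
    unfolding a_def b_def .
qed

text \<open>The n-th Picard iterate of the bound w \<le> 1 after time T, with
a = 1 + c (N+1) bounding the total jump rate per site.\<close>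

lemma power_bound:
  assumes "T \<ge> 0" and wT: "\<And>A. finite A \<Longrightarrow> A \<subseteq> tree_V N \<Longrightarrow> w T A \<le> 0"
  shows "finite A \<Longrightarrow> A \<subseteq> tree_V N \<Longrightarrow> T \<le> s \<Longrightarrow>
    w s A \<le> ((1 + c * real (N + 1)) * (s - T)) ^ n * real ((card A + n - 1) choose n)"
proof (induction n arbitrary: A s)
  case 0
  then show ?case
    using le_one[of s A] \<open>T \<ge> 0\<close> by simp
next
  case (Suc n)
  define a where "a = 1 + c * real (N + 1)"
  define m where "m = card A"
  define v where "v r = (a * (r - T)) ^ Suc n * real ((m + n) choose Suc n)" for r
  define v' where "v' r = a * real m * ((a * (r - T)) ^ n * real ((m + n) choose n))" for r
  have "w s A \<le> v s"
  proof (rule exp_weighted_comparison[where w = "\<lambda>r. w r A" and v = v and Q = "dual_rate N c A"])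
    show "T \<le> s"
      using Suc.prems by simp
    show "((\<lambda>r. w r A) has_real_derivative w' r A) (at r within {T..s})" if "r \<in> {T..s}" for r
      using has_derivative[of r A] Suc.prems that \<open>T \<ge> 0\<close>
      by (auto intro: has_field_derivative_subset)
    show "(v has_real_derivative v' r) (at r within {T..s})" for r
      unfolding v_def v'_def by (rule has_real_derivative_power_mult_choose)
    show "w T A \<le> v T"
      using wT Suc.prems by (simp add: v_def)
  next
    fix r assume r: "r \<in> {T<..<s}"
    have "w' r A + dual_rate N c A * w r A \<le> v' r"
      unfolding v'_def a_def m_def
      using Suc.IH Suc.prems r \<open>T \<ge> 0\<close> by (intro derivative_plus_rate_le) auto
    moreover have "dual_rate N c A * v r \<ge> 0"
      using dual_rate_nonneg[OF c_nonneg] c_nonneg r by (simp add: v_def a_def)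
    ultimately show "w' r A + dual_rate N c A * w r A \<le> v' r + dual_rate N c A * v r"
      by simp
  qed
  then show ?case
    by (simp add: v_def a_def m_def)
qed

lemma nonpos_on_interval:
  assumes "T \<ge> 0" and wT: "\<And>A. finite A \<Longrightarrow> A \<subseteq> tree_V N \<Longrightarrow> w T A \<le> 0"
    and s: "T \<le> s" "(1 + c * real (N + 1)) * (s - T) \<le> 1/4"
    and A: "finite A" "A \<subseteq> tree_V N"
  shows "w s A \<le> 0"
proof (rule LIMSEQ_le_const)
  show "(\<lambda>n. 2 ^ card A * (1/2::real) ^ n) \<longlonglongrightarrow> 0"
    by (intro tendsto_mult_right_zero LIMSEQ_power_zero) auto
  have "0 \<le> (1 + c * real (N + 1)) * (s - T)"
    using c_nonneg s by simp
  then show "\<exists>N. \<forall>n\<ge>N. w s A \<le> 2 ^ card A * (1/2) ^ n"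
    using power_bound[OF assms(1,2) A s(1)] power_mult_choose_le[OF _ s(2)] order_trans by blast
qed

lemma nonpos:
  assumes w0: "\<And>A. finite A \<Longrightarrow> A \<subseteq> tree_V N \<Longrightarrow> w 0 A \<le> 0"
    and "s \<ge> 0" "finite A" "A \<subseteq> tree_V N"
  shows "w s A \<le> 0"
proof -
  define \<delta> where "\<delta> = 1 / (4 * (1 + c * real (N + 1)))"
  have "1 + c * real (N + 1) > 0"
    using c_nonneg by (intro add_pos_nonneg mult_nonneg_nonneg) simp_all
  then have \<delta>: "\<delta> > 0" "(1 + c * real (N + 1)) * \<delta> = 1/4"
    unfolding \<delta>_def by simp_all
  have "\<forall>s A. 0 \<le> s \<and> s \<le> real k * \<delta> \<and> finite A \<and> A \<subseteq> tree_V N \<longrightarrow> w s A \<le> 0" for k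
  proof (induction k)
    case 0
    then show ?case using w0 by auto
  next
    case (Suc k)
    show ?case
    proof (intro allI impI)
      fix s A assume sA: "0 \<le> s \<and> s \<le> real (Suc k) * \<delta> \<and> finite A \<and> A \<subseteq> tree_V N"
      show "w s A \<le> 0"
      proof (cases "s \<le> real k * \<delta>")
        case True
        then show ?thesis using Suc.IH sA by blast
      next
        case False
        have "(1 + c * real (N + 1)) * (s - real k * \<delta>) \<le> (1 + c * real (N + 1)) * \<delta>"
          using sA c_nonneg by (intro mult_left_mono) (auto simp: algebra_simps)
        then show ?thesis
          using nonpos_on_interval[of "real k * \<delta>" s A] Suc.IH sA False \<delta> by auto
      qed
    qed
  qed
  moreover obtain k :: nat where "s / \<delta> \<le> real k"
    using real_arch_simple by blast
  then have "s \<le> real k * \<delta>"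
    using \<delta> by (simp add: divide_le_eq)
  ultimately show ?thesis
    using assms by blast
qed

end

definition vacant :: "nat list set \<Rightarrow> config \<Rightarrow> real" where
  "vacant B \<eta> = of_bool (\<forall>x\<in>B. \<not> \<eta> x)"

lemma cylinder_on_vacant: "finite B \<Longrightarrow> B \<subseteq> tree_V N \<Longrightarrow> cylinder_on N B (vacant B)"
  unfolding cylinder_on_def vacant_def by auto

lemma integral_vacant: "(\<integral>\<eta>. vacant B \<eta> \<partial>M) = measure M {\<eta> \<in> space M. \<forall>x\<in>B. \<not> \<eta> x}"
proof -
  have "(\<integral>\<eta>. vacant B \<eta> \<partial>M) = (\<integral>\<eta>. indicator {\<eta> \<in> space M. \<forall>x\<in>B. \<not> \<eta> x} \<eta> \<partial>M)"
    by (rule Bochner_Integration.integral_cong) (auto simp: vacant_def indicator_def)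
  then show ?thesis
    by (simp add: Int_absorb2)
qed

lemma sets_vacant:
  assumes "finite B" "B \<subseteq> tree_V N" "sets M = sets (config_space N)"
  shows "{\<eta> \<in> space M. \<forall>x\<in>B. \<not> \<eta> x} \<in> sets M"
  using sets_config_space_Collect_finite[OF assms(1,2)] assms(3) sets_eq_imp_space_eq[OF assms(3)]
  by simp

lemma flip_vacant_site:
  assumes "x \<in> A" and r: "\<not> \<eta> x \<Longrightarrow> r = c * real (card {y \<in> nbrs N x. \<eta> y})"
  shows "r * (vacant A (flip \<eta> x) - vacant A \<eta>) =
    (vacant (A - {x}) \<eta> - vacant A \<eta>) + c * (\<Sum>y\<in>nbrs N x - A. vacant (insert y A) \<eta> - vacant A \<eta>)
    + (r - 1) * of_bool (\<eta> x \<and> (\<forall>z\<in>A - {x}. \<not> \<eta> z))"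
proof -
  consider (all) "\<forall>z\<in>A. \<not> \<eta> z" | (occupied) "\<exists>z\<in>A. \<eta> z"
    by blast
  then show ?thesis
  proof cases
    case all
    have "(\<Sum>y\<in>nbrs N x - A. vacant (insert y A) \<eta> - vacant A \<eta>) = (\<Sum>y\<in>nbrs N x - A. - of_bool (\<eta> y))"
      using all by (intro sum.cong) (auto simp: vacant_def)
    also have "\<dots> = - real (card ((nbrs N x - A) \<inter> {y. \<eta> y}))"
      using finite_nbrs[of N x] by (simp add: sum_negf)
    also have "(nbrs N x - A) \<inter> {y. \<eta> y} = {y \<in> nbrs N x. \<eta> y}"
      using all by auto
    finally show ?thesis
      using all r \<open>x \<in> A\<close> by (auto simp: vacant_def flip_def)
  next
    case occupied
    define t :: real where "t = of_bool (\<eta> x \<and> (\<forall>z\<in>A - {x}. \<not> \<eta> z))"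
    have "(\<Sum>y\<in>nbrs N x - A. vacant (insert y A) \<eta> - vacant A \<eta>) = 0"
      using occupied by (intro sum.neutral) (auto simp: vacant_def)
    moreover have "vacant A \<eta> = 0" "vacant A (flip \<eta> x) = t" "vacant (A - {x}) \<eta> = t"
      using occupied \<open>x \<in> A\<close> by (auto simp: vacant_def flip_def t_def)
    ultimately show ?thesis
      unfolding t_def[symmetric] by (simp add: algebra_simps)
  qed
qed

text \<open>The remainder vanishes when occupied sites flip at rate 1 (duality for the contact
process) and is nonpositive when they flip at rate at most 1 (bias voter model with
\<theta> = 1).\<close>

lemma gen_vacant_eq:
  assumes "\<And>x. x \<in> A \<Longrightarrow> \<not> \<eta> x \<Longrightarrow> r \<eta> x = c * real (card {y \<in> nbrs N x. \<eta> y})"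
  shows "gen r A (vacant A) \<eta> = dual_gen N c A (\<lambda>B. vacant B \<eta>)
    + (\<Sum>x\<in>A. (r \<eta> x - 1) * of_bool (\<eta> x \<and> (\<forall>z\<in>A - {x}. \<not> \<eta> z)))"
  unfolding gen_def dual_gen_def
  by (simp add: flip_vacant_site[OF _ assms] sum.distrib sum_distrib_left cong: sum.cong)

lemma gen_cp_vacant:
  "gen (cp_rate N lam) A (vacant A) \<eta> = dual_gen N (lam / real (N + 1)) A (\<lambda>B. vacant B \<eta>)"
  by (subst gen_vacant_eq[where N = N and c = "lam / real (N + 1)"])
    (auto simp: cp_rate_def intro!: sum.neutral)

lemma gen_bv_vacant_le:
  assumes "A \<subseteq> tree_V N"
  shows "gen (bv_rate N lam 1) A (vacant A) \<eta> \<le> dual_gen N (lam / real (N + 1)) A (\<lambda>B. vacant B \<eta>)"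
proof -
  have "bv_rate N lam 1 \<eta> x \<le> 1" if "x \<in> A" "\<eta> x" for x
  proof -
    have "card {y \<in> nbrs N x. \<not> \<eta> y} \<le> N + 1"
      using card_mono[OF finite_nbrs[of N x], of "{y \<in> nbrs N x. \<not> \<eta> y}"] card_nbrs_le[of x N]
        that assms by auto
    then show ?thesis
      using \<open>\<eta> x\<close> by (simp add: bv_rate_def field_simps)
  qed
  then have "(\<Sum>x\<in>A. (bv_rate N lam 1 \<eta> x - 1) * of_bool (\<eta> x \<and> (\<forall>z\<in>A - {x}. \<not> \<eta> z))) \<le> 0"
    by (intro sum_nonpos) (simp add: mult_nonpos_nonneg)
  then show ?thesis
    by (subst gen_vacant_eq[where N = N and c = "lam / real (N + 1)"]) (simp_all add: bv_rate_def)
qed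

lemma
  fixes g :: "nat list set \<Rightarrow> config \<Rightarrow> real"
  assumes g: "\<And>B. finite B \<Longrightarrow> B \<subseteq> tree_V N \<Longrightarrow> integrable M (g B)"
    and A: "finite A" "A \<subseteq> tree_V N"
  shows integrable_dual_gen: "integrable M (\<lambda>\<eta>. dual_gen N c A (\<lambda>B. g B \<eta>))"
    and integral_dual_gen: "(\<integral>\<eta>. dual_gen N c A (\<lambda>B. g B \<eta>) \<partial>M) = dual_gen N c A (\<lambda>B. \<integral>\<eta>. g B \<eta> \<partial>M)"
proof -
  have ins: "integrable M (g (insert y A))" if "y \<in> nbrs N x" for x y
    using that A nbrs_subset_tree_V by (intro g) auto
  have "integrable M (g A)" "integrable M (g (A - {x}))" for x
    using g A by auto
  note integrable = this ins
  have I1: "integrable M (\<lambda>\<eta>. \<Sum>x\<in>A. g (A - {x}) \<eta> - g A \<eta>)"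
    and I2: "integrable M (\<lambda>\<eta>. \<Sum>x\<in>A. \<Sum>y\<in>nbrs N x - A. g (insert y A) \<eta> - g A \<eta>)"
    using integrable by (intro Bochner_Integration.integrable_sum Bochner_Integration.integrable_diff; auto)+
  then show "integrable M (\<lambda>\<eta>. dual_gen N c A (\<lambda>B. g B \<eta>))"
    unfolding dual_gen_def by simp
  have "(\<integral>\<eta>. (\<Sum>x\<in>A. g (A - {x}) \<eta> - g A \<eta>) \<partial>M) = (\<Sum>x\<in>A. (\<integral>\<eta>. g (A - {x}) \<eta> \<partial>M) - (\<integral>\<eta>. g A \<eta> \<partial>M))"
    using integrable by (simp add: Bochner_Integration.integral_sum Bochner_Integration.integral_diff)
  moreover have "(\<integral>\<eta>. (\<Sum>x\<in>A. \<Sum>y\<in>nbrs N x - A. g (insert y A) \<eta> - g A \<eta>) \<partial>M) =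
      (\<Sum>x\<in>A. \<Sum>y\<in>nbrs N x - A. (\<integral>\<eta>. g (insert y A) \<eta> \<partial>M) - (\<integral>\<eta>. g A \<eta> \<partial>M))"
  proof -
    have "(\<integral>\<eta>. (\<Sum>x\<in>A. \<Sum>y\<in>nbrs N x - A. g (insert y A) \<eta> - g A \<eta>) \<partial>M) =
        (\<Sum>x\<in>A. \<integral>\<eta>. (\<Sum>y\<in>nbrs N x - A. g (insert y A) \<eta> - g A \<eta>) \<partial>M)"
      using integrable by (intro Bochner_Integration.integral_sum) auto
    also have "\<dots> = (\<Sum>x\<in>A. \<Sum>y\<in>nbrs N x - A. \<integral>\<eta>. g (insert y A) \<eta> - g A \<eta> \<partial>M)"
      using integrable by (intro sum.cong refl Bochner_Integration.integral_sum) auto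
    also have "\<dots> = (\<Sum>x\<in>A. \<Sum>y\<in>nbrs N x - A. (\<integral>\<eta>. g (insert y A) \<eta> \<partial>M) - (\<integral>\<eta>. g A \<eta> \<partial>M))"
      using integrable by (intro sum.cong refl Bochner_Integration.integral_diff) auto
    finally show ?thesis .
  qed
  ultimately show "(\<integral>\<eta>. dual_gen N c A (\<lambda>B. g B \<eta>) \<partial>M) = dual_gen N c A (\<lambda>B. \<integral>\<eta>. g B \<eta> \<partial>M)"
    unfolding dual_gen_def using I1 I2 by simp
qed

lemma spin_system_law_prob_space:
  assumes "spin_system_law N c \<mu>0 \<mu>" "s \<ge> 0"
  shows "prob_space (\<mu> s)" "sets (\<mu> s) = sets (config_space N)"
  using assms unfolding spin_system_law_def by auto

lemma integral_gen_cp_vacant: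
  assumes M: "prob_space M" "sets M = sets (config_space N)" and A: "finite A" "A \<subseteq> tree_V N"
  shows "(\<integral>\<eta>. gen (cp_rate N lam) A (vacant A) \<eta> \<partial>M)
    = dual_gen N (lam / real (N + 1)) A (\<lambda>B. \<integral>\<eta>. vacant B \<eta> \<partial>M)"
  unfolding gen_cp_vacant
  by (rule integral_dual_gen[OF cylinder_on_integrable[OF cylinder_on_vacant M] A])

lemma integral_gen_bv_vacant_le:
  assumes M: "prob_space M" "sets M = sets (config_space N)" and A: "finite A" "A \<subseteq> tree_V N"
  shows "(\<integral>\<eta>. gen (bv_rate N lam 1) A (vacant A) \<eta> \<partial>M)
    \<le> dual_gen N (lam / real (N + 1)) A (\<lambda>B. \<integral>\<eta>. vacant B \<eta> \<partial>M)"
proof -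
  note vacant_integrable = cylinder_on_integrable[OF cylinder_on_vacant M]
  have "(\<integral>\<eta>. gen (bv_rate N lam 1) A (vacant A) \<eta> \<partial>M)
      \<le> (\<integral>\<eta>. dual_gen N (lam / real (N + 1)) A (\<lambda>B. vacant B \<eta>) \<partial>M)"
  proof (rule integral_mono)
    show "integrable M (gen (bv_rate N lam 1) A (vacant A))"
      using cylinder_on_gen[OF cylinder_on_vacant[OF A] bv_rate_local] M
      by (rule cylinder_on_integrable)
    show "integrable M (\<lambda>\<eta>. dual_gen N (lam / real (N + 1)) A (\<lambda>B. vacant B \<eta>))"
      by (rule integrable_dual_gen[OF vacant_integrable A])
  qed (rule gen_bv_vacant_le[OF A(2)])
  also have "\<dots> = dual_gen N (lam / real (N + 1)) A (\<lambda>B. \<integral>\<eta>. vacant B \<eta> \<partial>M)"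
    by (rule integral_dual_gen[OF vacant_integrable A])
  finally show ?thesis .
qed

lemma integral_vacant_bv_le_cp:
  assumes "lam \<ge> 0"
    and BV: "spin_system_law N (bv_rate N lam 1) \<mu>0 \<mu>BV"
    and CP: "spin_system_law N (cp_rate N lam) \<mu>0 \<mu>CP"
    and "finite A" "A \<subseteq> tree_V N" "t \<ge> 0"
  shows "(\<integral>\<eta>. vacant A \<eta> \<partial>\<mu>BV t) \<le> (\<integral>\<eta>. vacant A \<eta> \<partial>\<mu>CP t)"
proof -
  define w where "w s B = (\<integral>\<eta>. vacant B \<eta> \<partial>\<mu>BV s) - (\<integral>\<eta>. vacant B \<eta> \<partial>\<mu>CP s)" for s B
  define w' where "w' s B = (\<integral>\<eta>. gen (bv_rate N lam 1) B (vacant B) \<eta> \<partial>\<mu>BV s)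
    - (\<integral>\<eta>. gen (cp_rate N lam) B (vacant B) \<eta> \<partial>\<mu>CP s)" for s B
  interpret dual_subsolution N "lam / real (N + 1)" w w'
  proof unfold_locales
    show "lam / real (N + 1) \<ge> 0"
      using \<open>lam \<ge> 0\<close> by simp
    fix s :: real and B assume s: "s \<ge> 0" and B: "finite B" "B \<subseteq> tree_V N"
    note BV_space = spin_system_law_prob_space[OF BV s]
    note CP_space = spin_system_law_prob_space[OF CP s]
    show "w s B \<le> 1"
      using prob_space.prob_le_1[OF BV_space(1)] measure_nonneg
      unfolding w_def integral_vacant by (smt (verit))
    show "((\<lambda>s. w s B) has_real_derivative w' s B) (at s within {0..})"
      using BV CP s cylinder_on_vacant[OF B] unfolding spin_system_law_def w_def w'_def
      by (intro DERIV_diff) auto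
    show "w' s B \<le> dual_gen N (lam / real (N + 1)) B (w s)"
      using integral_gen_bv_vacant_le[OF BV_space B] integral_gen_cp_vacant[OF CP_space B]
      unfolding w_def w'_def dual_gen_diff[symmetric] by simp
  qed
  have "w 0 B = 0" for B
    using BV CP by (simp add: w_def spin_system_law_def)
  then have "w t A \<le> 0"
    using nonpos assms by simp
  then show ?thesis
    by (simp add: w_def)
qed

lemma measure_vacant_from_nat_into_LIMSEQ:
  assumes M: "prob_space M" "sets M = sets (config_space N)"
    and A: "A \<subseteq> tree_V N" "A \<noteq> {}"
  shows "(\<lambda>n. measure M {\<eta> \<in> space M. \<forall>x\<in>from_nat_into A ` {..<n}. \<not> \<eta> x})
     \<longlonglongrightarrow> measure M {\<eta> \<in> space M. \<forall>x\<in>A. \<not> \<eta> x}"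
proof -
  interpret prob_space M by (rule M(1))
  define S where "S n = {\<eta> \<in> space M. \<forall>x\<in>from_nat_into A ` {..<n}. \<not> \<eta> x}" for n
  have "from_nat_into A ` {..<n} \<subseteq> tree_V N" for n
    using from_nat_into[OF A(2)] A(1) by blast
  then have "range S \<subseteq> sets M"
    unfolding S_def using sets_vacant[OF _ _ M(2)] by blast
  moreover have "decseq S"
    unfolding decseq_def S_def by auto
  ultimately have "(\<lambda>n. measure M (S n)) \<longlonglongrightarrow> measure M (\<Inter>n. S n)"
    by (rule finite_Lim_measure_decseq)
  moreover have "(\<Union>n. from_nat_into A ` {..<n}) = A"
    using range_from_nat_into[OF A(2)] countable_subset[OF subset_UNIV]
    by (simp flip: image_UN add: UN_lessThan_UNIV)
  then have "(\<Inter>n. S n) = {\<eta> \<in> space M. \<forall>x\<in>A. \<not> \<eta> x}"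
    unfolding S_def by blast
  ultimately show ?thesis
    unfolding S_def by simp
qed

lemma measure_vacant_bv_le_cp:
  assumes "lam \<ge> 0"
    and BV: "spin_system_law N (bv_rate N lam 1) \<mu>0 \<mu>BV"
    and CP: "spin_system_law N (cp_rate N lam) \<mu>0 \<mu>CP"
    and A: "A \<subseteq> tree_V N" and "t \<ge> 0"
  shows "measure (\<mu>BV t) {\<eta> \<in> space (\<mu>BV t). \<forall>x\<in>A. \<not> \<eta> x}
           \<le> measure (\<mu>CP t) {\<eta> \<in> space (\<mu>CP t). \<forall>x\<in>A. \<not> \<eta> x}"
proof -
  have finite_case: "measure (\<mu>BV t) {\<eta> \<in> space (\<mu>BV t). \<forall>x\<in>B. \<not> \<eta> x}
      \<le> measure (\<mu>CP t) {\<eta> \<in> space (\<mu>CP t). \<forall>x\<in>B. \<not> \<eta> x}" if "finite B" "B \<subseteq> tree_V N" for B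
    using integral_vacant_bv_le_cp[OF \<open>lam \<ge> 0\<close> BV CP that \<open>t \<ge> 0\<close>]
    unfolding integral_vacant .
  show ?thesis
  proof (cases "finite A")
    case True
    then show ?thesis
      using finite_case A by blast
  next
    case False
    then have "A \<noteq> {}" by auto
    have "from_nat_into A ` {..<n} \<subseteq> tree_V N" for n
      using from_nat_into[OF \<open>A \<noteq> {}\<close>] A by blast
    then have "measure (\<mu>BV t) {\<eta> \<in> space (\<mu>BV t). \<forall>x\<in>from_nat_into A ` {..<n}. \<not> \<eta> x}
        \<le> measure (\<mu>CP t) {\<eta> \<in> space (\<mu>CP t). \<forall>x\<in>from_nat_into A ` {..<n}. \<not> \<eta> x}" for n
      by (intro finite_case) simp_all
    then show ?thesis
      by (intro LIMSEQ_le[OF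
            measure_vacant_from_nat_into_LIMSEQ[OF spin_system_law_prob_space[OF BV \<open>t \<ge> 0\<close>] A \<open>A \<noteq> {}\<close>]
            measure_vacant_from_nat_into_LIMSEQ[OF spin_system_law_prob_space[OF CP \<open>t \<ge> 0\<close>] A \<open>A \<noteq> {}\<close>]])
        simp
  qed
qed

theorem lemma4p1:
  fixes N :: nat and lam p :: real
    and \<mu>BV \<mu>CP :: "real \<Rightarrow> config measure"
    and A :: "nat list set" and t :: real
  assumes "N \<ge> 1" and "lam > 1" and "0 < p" and "p < 1"
    and "spin_system_law N (bv_rate N lam 1) (bern_product N p) \<mu>BV"
    and "spin_system_law N (cp_rate N lam) (bern_product N p) \<mu>CP"
    and "A \<subseteq> tree_V N" and "t \<ge> 0"
  shows "measure (\<mu>BV t) {\<eta> \<in> space (\<mu>BV t). \<forall>x\<in>A. \<not> \<eta> x}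
           \<le> measure (\<mu>CP t) {\<eta> \<in> space (\<mu>CP t). \<forall>x\<in>A. \<not> \<eta> x}"
  using measure_vacant_bv_le_cp[OF _ assms(5-8)] \<open>lam > 1\<close> by simp

end
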